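(* For any $0<p<\frac{1}{2}$ and any confidence threshold $0<\delta<\frac{1}{2}$, there exists an adaptive Las Vegas noisy binary search algorithm for a linear order of $n$ elements that, for every (adversarially chosen) target, after an expected number of $$\frac{1}{I(p)}\left(\log_2 n+\mathcal{O}(\log\log n)+\mathcal{O}(\log\delta^{-1})\right)$$ queries returns the target correctly with probability at least $1-\delta$.
   Context: Noisy binary search model: the search space is a linear order $\{1,\dots,n\}$ containing an unknown target $v^*$, fixed in advance by an adversary who knows the algorithm. In each step the algorithm chooses an element $q$ and asks a comparison query, whose correct answer is "$<$" if $v^*<q$ and "$>$" otherwise. Each answer is, independently, incorrect (the opposite answer) with probability $p$ and correct with probability $1-p$. The algorithm is adaptive and may use randomness; the number of queries is random and the bound is on its expectation. $H(p)=-p\log_2 p-(1-p)\log_2(1-p)$ and $I(p)=1-H(p)$. *)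

theory Defs
  imports "HOL-Analysis.Analysis"
begin

definition bin_entropy :: "real \<Rightarrow> real" where
  "bin_entropy p = - p * log 2 p - (1 - p) * log 2 (1 - p)"

definition capacity :: "real \<Rightarrow> real" where
  "capacity p = 1 - bin_entropy p"

text \<open>An adaptive randomized algorithm is a strategy mapping the history of
  observed bits (noisy query answers and fair coin flips) to the next action.
  Answer bit True encodes the answer "<" (i.e. the target is below q).\<close>
datatype action = Query nat | Coin | Return nat

definition step_prob :: "real \<Rightarrow> nat \<Rightarrow> action \<Rightarrow> bool \<Rightarrow> real" where
  "step_prob p v a b = (case a of
      Query q \<Rightarrow> (if b = (v < q) then 1 - p else p)
    | Coin \<Rightarrow> 1 / 2
    | Return u \<Rightarrow> 0)"

text \<open>Probability that the run of strategy s with target v produces history h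
  (histories passing through a Return have probability 0).\<close>
definition reach_prob :: "real \<Rightarrow> (bool list \<Rightarrow> action) \<Rightarrow> nat \<Rightarrow> bool list \<Rightarrow> real" where
  "reach_prob p s v h = (\<Prod>i<length h. step_prob p v (s (take i h)) (h ! i))"

definition is_query :: "action \<Rightarrow> bool" where
  "is_query a = (\<exists>q. a = Query q)"

definition is_return :: "action \<Rightarrow> bool" where
  "is_return a = (\<exists>u. a = Return u)"

definition expected_queries :: "real \<Rightarrow> (bool list \<Rightarrow> action) \<Rightarrow> nat \<Rightarrow> ennreal" where
  "expected_queries p s v =
     (\<Sum>k. \<Sum>h\<in>{h::bool list. length h = k}.
        (if is_query (s h) then ennreal (reach_prob p s v h) else 0))"

definition halt_prob :: "real \<Rightarrow> (bool list \<Rightarrow> action) \<Rightarrow> nat \<Rightarrow> ennreal" where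
  "halt_prob p s v =
     (\<Sum>k. \<Sum>h\<in>{h::bool list. length h = k}.
        (if is_return (s h) then ennreal (reach_prob p s v h) else 0))"

definition success_prob :: "real \<Rightarrow> (bool list \<Rightarrow> action) \<Rightarrow> nat \<Rightarrow> ennreal" where
  "success_prob p s v =
     (\<Sum>k. \<Sum>h\<in>{h::bool list. length h = k}.
        (if s h = Return v then ennreal (reach_prob p s v h) else 0))"

end

theory Submission
  imports Defs
begin

text \<open>The algorithm maintains the posterior weights of all candidates under the known noise
  rate \<open>p\<close> and queries at a weighted median, randomly rounded with \<open>k\<close> fair coins so that on
  average half of the weight lies on each side of the query. Then the log-odds against the
  true target drop in expectation by at least \<open>I(p) - 4 / 2 ^ k\<close> per query, and optional
  stopping bounds the expected number of queries by the initial log-odds, about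
  \<open>log\<^sub>2 n + log\<^sub>2 (1 / \<delta>)\<close>, divided by this rate; \<open>k \<approx> log\<^sub>2 log\<^sub>2 n\<close> makes the loss in the
  rate negligible. The search stops as soon as one candidate carries a \<open>1 - \<delta> / 2\<close> fraction
  of the weight, so by Bayes' rule its error is at most \<open>\<delta> / 2\<close> averaged over targets.
  Running it on a range of fewer than \<open>3 n\<close> candidates, with the target shifted by a uniformly
  random offset, turns this average into a bound for every target.\<close>

section \<open>Runs of a strategy\<close>

lemma finite_bool_lists_length: "finite {h::bool list. length h = n}"
  using finite_lists_length_eq[of "UNIV::bool set" n] by simp

lemma bool_lists_length_Suc:
  "{h::bool list. length h = Suc n} =
     (\<lambda>h. h @ [True]) ` {h. length h = n} \<union> (\<lambda>h. h @ [False]) ` {h. length h = n}"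
proof (intro set_eqI iffI)
  fix x :: "bool list"
  assume "x \<in> {h. length h = Suc n}"
  then have "x = butlast x @ [last x]" "length (butlast x) = n"
    by (auto intro!: append_butlast_last_id[symmetric])
  then show "x \<in> (\<lambda>h. h @ [True]) ` {h. length h = n} \<union> (\<lambda>h. h @ [False]) ` {h. length h = n}"
    by (cases "last x") (auto intro: rev_image_eqI[of "butlast x"])
qed auto

lemma sum_bool_lists_length_Suc:
  "(\<Sum>h\<in>{h::bool list. length h = Suc n}. f h) =
     (\<Sum>h\<in>{h. length h = n}. f (h @ [True]) + f (h @ [False]))"
proof -
  have "inj_on (\<lambda>h::bool list. h @ [b]) A" for b A
    by (auto simp: inj_on_def)
  then show ?thesis
    unfolding bool_lists_length_Suc
    by (subst sum.union_disjoint) (auto simp: finite_bool_lists_length sum.reindex sum.distrib)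
qed

lemma sum_bool_lists_length_add:
  "(\<Sum>h\<in>{h::bool list. length h = j + K}. f h) =
     (\<Sum>bs\<in>{h. length h = j}. \<Sum>g\<in>{h. length h = K}. f (bs @ g))"
proof -
  have split: "{h::bool list. length h = j + K} =
      (\<lambda>(a, b). a @ b) ` ({h. length h = j} \<times> {h. length h = K})"
  proof (intro set_eqI iffI)
    fix h :: "bool list"
    assume "h \<in> {h. length h = j + K}"
    then have "h = (\<lambda>(a, b). a @ b) (take j h, drop j h)"
      "(take j h, drop j h) \<in> {h. length h = j} \<times> {h. length h = K}"
      by auto
    then show "h \<in> (\<lambda>(a, b). a @ b) ` ({h. length h = j} \<times> {h. length h = K})"
      by blast
  qed auto
  have inj: "inj_on (\<lambda>(a, b). a @ b) ({h::bool list. length h = j} \<times> {h. length h = K})"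
    by (auto simp: inj_on_def)
  show ?thesis
    unfolding split sum.reindex[OF inj] sum.cartesian_product by (simp add: case_prod_beta)
qed

lemma is_query_simps [simp]: "is_query (Query q)" "\<not> is_query Coin" "\<not> is_query (Return u)"
  by (simp_all add: is_query_def)

lemma is_return_simps [simp]: "\<not> is_return (Query q)" "\<not> is_return Coin" "is_return (Return u)"
  by (simp_all add: is_return_def)

lemma step_prob_nonneg: "0 \<le> p \<Longrightarrow> p \<le> 1 \<Longrightarrow> 0 \<le> step_prob p v a b"
  by (cases a) (auto simp: step_prob_def)

lemma step_prob_True_plus_False:
  "step_prob p v a True + step_prob p v a False = (if is_return a then 0 else 1)"
  by (cases a) (auto simp: step_prob_def is_return_def)

lemma reach_prob_Nil [simp]: "reach_prob p s v [] = 1"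
  by (simp add: reach_prob_def)

lemma reach_prob_snoc:
  "reach_prob p s v (h @ [b]) = reach_prob p s v h * step_prob p v (s h) b"
  unfolding reach_prob_def by (simp add: lessThan_Suc nth_append)

lemma reach_prob_nonneg: "0 \<le> p \<Longrightarrow> p \<le> 1 \<Longrightarrow> 0 \<le> reach_prob p s v h"
  unfolding reach_prob_def by (intro prod_nonneg) (auto intro: step_prob_nonneg)

definition expected_next :: "real \<Rightarrow> (bool list \<Rightarrow> action) \<Rightarrow> nat \<Rightarrow> (bool list \<Rightarrow> real) \<Rightarrow> bool list \<Rightarrow> real"
  where "expected_next p s v \<Phi> h =
    step_prob p v (s h) True * \<Phi> (h @ [True]) + step_prob p v (s h) False * \<Phi> (h @ [False])"

lemma supermartingale_bound:
  assumes p: "0 \<le> p" "p \<le> 1"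
    and drift: "\<And>h. c h + expected_next p s v \<Phi> h \<le> \<Phi> h"
  shows "(\<Sum>N<M. \<Sum>h\<in>{h. length h = N}. reach_prob p s v h * c h)
          + (\<Sum>h\<in>{h. length h = M}. reach_prob p s v h * \<Phi> h) \<le> \<Phi> []"
proof (induction M)
  case 0
  then show ?case by simp
next
  case (Suc M)
  have "(\<Sum>h\<in>{h. length h = Suc M}. reach_prob p s v h * \<Phi> h)
      = (\<Sum>h\<in>{h. length h = M}. reach_prob p s v h * expected_next p s v \<Phi> h)"
    by (simp add: sum_bool_lists_length_Suc reach_prob_snoc expected_next_def algebra_simps)
  also have "\<dots> \<le> (\<Sum>h\<in>{h. length h = M}. reach_prob p s v h * (\<Phi> h - c h))"
    using drift reach_prob_nonneg[OF p] by (intro sum_mono mult_left_mono) (auto simp: algebra_simps)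
  finally show ?case
    using Suc by (simp add: algebra_simps sum_subtractf sum.distrib)
qed

definition level_prob :: "real \<Rightarrow> (bool list \<Rightarrow> action) \<Rightarrow> nat \<Rightarrow> (action \<Rightarrow> bool) \<Rightarrow> nat \<Rightarrow> real"
  where "level_prob p s v P N =
    (\<Sum>h\<in>{h::bool list. length h = N}. if P (s h) then reach_prob p s v h else 0)"

lemma level_prob_nonneg: "0 \<le> p \<Longrightarrow> p \<le> 1 \<Longrightarrow> 0 \<le> level_prob p s v P N"
  unfolding level_prob_def by (intro sum_nonneg) (auto intro: reach_prob_nonneg)

lemma sum_level_prob_le:
  assumes p: "0 \<le> p" "p \<le> 1" and \<kappa>: "0 < \<kappa>" and nonneg: "\<And>h. 0 \<le> \<Phi> h"
    and drift: "\<And>h. \<kappa> * of_bool (P (s h)) + expected_next p s v \<Phi> h \<le> \<Phi> h"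
  shows "(\<Sum>N<M. level_prob p s v P N) \<le> \<Phi> [] / \<kappa>"
proof -
  have "(\<Sum>N<M. \<Sum>h\<in>{h. length h = N}. reach_prob p s v h * (\<kappa> * of_bool (P (s h))))
      + (\<Sum>h\<in>{h. length h = M}. reach_prob p s v h * \<Phi> h) \<le> \<Phi> []"
    by (rule supermartingale_bound[OF p drift])
  moreover have "0 \<le> (\<Sum>h\<in>{h. length h = M}. reach_prob p s v h * \<Phi> h)"
    using reach_prob_nonneg[OF p] nonneg by (intro sum_nonneg mult_nonneg_nonneg)
  moreover have "(\<Sum>h\<in>{h. length h = N}. reach_prob p s v h * (\<kappa> * of_bool (P (s h))))
      = \<kappa> * level_prob p s v P N" for N
    unfolding level_prob_def sum_distrib_left by (intro sum.cong) auto
  ultimately have "\<kappa> * (\<Sum>N<M. level_prob p s v P N) \<le> \<Phi> []"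
    by (simp add: sum_distrib_left)
  then show ?thesis
    using \<kappa> by (simp add: field_simps)
qed

lemma level_prob_split:
  "level_prob p s v P N =
     level_prob p s v (\<lambda>a. P a \<and> Q a) N + level_prob p s v (\<lambda>a. P a \<and> \<not> Q a) N"
  unfolding level_prob_def sum.distrib[symmetric] by (intro sum.cong) auto

lemma level_prob_True_Suc:
  "level_prob p s v (\<lambda>_. True) (Suc N) = level_prob p s v (\<lambda>a. \<not> is_return a) N"
  unfolding level_prob_def sum_bool_lists_length_Suc reach_prob_snoc
  by (intro sum.cong refl) (simp add: distrib_left[symmetric] step_prob_True_plus_False)

lemma level_prob_True_0: "level_prob p s v (\<lambda>_. True) 0 = 1"
  by (simp add: level_prob_def)

lemma sum_ennreal_level_prob:
  assumes "0 \<le> p" "p \<le> 1"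
  shows "(\<Sum>h\<in>{h::bool list. length h = N}. if P (s h) then ennreal (reach_prob p s v h) else 0)
           = ennreal (level_prob p s v P N)"
  unfolding level_prob_def using assms
  by (subst sum_ennreal[symmetric]) (auto intro!: sum.cong reach_prob_nonneg)

lemma level_prob_True_Suc_eq:
  "level_prob p s v (\<lambda>_. True) (Suc N) = level_prob p s v (\<lambda>_. True) N - level_prob p s v is_return N"
  using level_prob_split[of p s v "\<lambda>_. True" N is_return] level_prob_True_Suc[of p s v N] by simp

lemma sum_level_prob_is_return:
  "(\<Sum>N<M. level_prob p s v is_return N) = 1 - level_prob p s v (\<lambda>_. True) M"
  by (induction M) (simp_all add: level_prob_True_0 level_prob_True_Suc_eq)

lemma sum_level_prob_is_return_le_1:
  "0 \<le> p \<Longrightarrow> p \<le> 1 \<Longrightarrow> (\<Sum>N<M. level_prob p s v is_return N) \<le> 1"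
  using level_prob_nonneg[of p s v "\<lambda>_. True" M] by (simp add: sum_level_prob_is_return)

text \<open>The mass still running at depth \<open>M\<close> is at most \<open>\<Phi> [] / M\<close>: it is non-increasing in
  \<open>M\<close>, and its sum over the first \<open>M\<close> levels is at most \<open>\<Phi> []\<close>.\<close>
lemma halt_prob_eq_1I:
  assumes p: "0 \<le> p" "p \<le> 1" and nonneg: "\<And>h. 0 \<le> \<Phi> h"
    and drift: "\<And>h. of_bool (\<not> is_return (s h)) + expected_next p s v \<Phi> h \<le> \<Phi> h"
  shows "halt_prob p s v = 1"
proof -
  have "(\<Sum>N<M. level_prob p s v (\<lambda>a. \<not> is_return a) N) \<le> \<Phi> [] / 1" for M
    by (rule sum_level_prob_le[OF p zero_less_one]) (use nonneg drift in simp_all)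
  then have bounded: "(\<Sum>N<M. level_prob p s v (\<lambda>a. \<not> is_return a) N) \<le> \<Phi> []" for M
    by simp
  let ?A = "level_prob p s v (\<lambda>_. True)"
  let ?R = "level_prob p s v is_return"
  have A_antimono: "?A M \<le> ?A N" if "N \<le> M" for N M
    using that
  proof (induction M)
    case (Suc M)
    then show ?case
      using level_prob_True_Suc_eq[of p s v M] level_prob_nonneg[OF p, of s v is_return M]
      by (auto simp: le_Suc_eq)
  qed simp
  have "real M * ?A M \<le> \<Phi> []" for M
  proof -
    have "real M * ?A M \<le> (\<Sum>N<M. ?A (Suc N))"
      using sum_mono[of "{..<M}" "\<lambda>_. ?A M" "\<lambda>N. ?A (Suc N)"] A_antimono by simp
    also have "\<dots> \<le> \<Phi> []"
      using bounded[of M] by (simp only: level_prob_True_Suc)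
    finally show ?thesis .
  qed
  then have "\<forall>\<^sub>F M in sequentially. ?A M \<le> \<Phi> [] / real M"
    by (intro eventually_sequentiallyI[of 1]) (simp add: field_simps mult.commute)
  moreover have "\<forall>\<^sub>F M in sequentially. 0 \<le> ?A M"
    using level_prob_nonneg[OF p] by simp
  ultimately have "?A \<longlonglongrightarrow> 0"
    by (intro tendsto_sandwich[OF _ _ tendsto_const lim_const_over_n])
  then have "(\<lambda>M. 1 - ?A M) \<longlonglongrightarrow> 1 - 0"
    by (intro tendsto_diff tendsto_const)
  then have "?R sums 1"
    unfolding sums_def sum_level_prob_is_return by simp
  then show ?thesis
    unfolding halt_prob_def sum_ennreal_level_prob[OF p]
    using suminf_ennreal2[OF level_prob_nonneg[OF p]] by (simp add: sums_iff)
qed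

lemma expected_queries_leI:
  assumes p: "0 \<le> p" "p \<le> 1" and \<kappa>: "0 < \<kappa>" and nonneg: "\<And>h. 0 \<le> \<Phi> h"
    and drift: "\<And>h. \<kappa> * of_bool (is_query (s h)) + expected_next p s v \<Phi> h \<le> \<Phi> h"
  shows "expected_queries p s v \<le> ennreal (\<Phi> [] / \<kappa>)"
  unfolding expected_queries_def sum_ennreal_level_prob[OF p] suminf_eq_SUP
proof (rule SUP_least)
  fix M
  have "(\<Sum>N<M. ennreal (level_prob p s v is_query N)) = ennreal (\<Sum>N<M. level_prob p s v is_query N)"
    using level_prob_nonneg[OF p] by (intro sum_ennreal) auto
  then show "(\<Sum>N<M. ennreal (level_prob p s v is_query N)) \<le> ennreal (\<Phi> [] / \<kappa>)"
    using sum_level_prob_le[OF p \<kappa> nonneg drift, of M] by (simp add: ennreal_leI)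
qed

lemma success_prob_geI:
  assumes p: "0 \<le> p" "p \<le> 1"
    and halt: "halt_prob p s v = 1"
    and bounded: "\<And>M. (\<Sum>N<M. level_prob p s v (\<lambda>a. is_return a \<and> a \<noteq> Return v) N) \<le> d"
  shows "ennreal (1 - d) \<le> success_prob p s v"
proof -
  let ?R = "level_prob p s v is_return"
  let ?E = "level_prob p s v (\<lambda>a. is_return a \<and> a \<noteq> Return v)"
  let ?S = "level_prob p s v (\<lambda>a. a = Return v)"
  have "(\<lambda>a. is_return a \<and> a = Return v) = (\<lambda>a. a = Return v)"
    by (auto simp: is_return_def)
  then have R_eq: "?R N = ?S N + ?E N" for N
    using level_prob_split[of p s v is_return N "\<lambda>a. a = Return v"] by simp
  have "(\<Sum>N. ennreal (?R N)) = 1"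
    using halt unfolding halt_prob_def sum_ennreal_level_prob[OF p] .
  moreover have sR: "summable ?R"
    using calculation level_prob_nonneg[OF p] by (intro summable_suminf_not_top) auto
  ultimately have R1: "suminf ?R = 1"
    using suminf_ennreal2[OF level_prob_nonneg[OF p] sR] suminf_nonneg[OF sR level_prob_nonneg[OF p]]
    by simp
  have sE: "summable ?E"
    using R_eq level_prob_nonneg[OF p]
    by (intro summable_comparison_test'[OF sR, of 0]) (simp add: add_increasing)
  have sS: "summable ?S" and S_eq: "suminf ?S = suminf ?R - suminf ?E"
    using summable_diff[OF sR sE] suminf_diff[OF sR sE] R_eq by simp_all
  have "suminf ?E \<le> d"
    by (rule suminf_le_const[OF sE bounded])
  then have "ennreal (1 - d) \<le> ennreal (suminf ?S)"
    using R1 S_eq by (intro ennreal_leI) simp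
  also have "\<dots> = (\<Sum>N. ennreal (?S N))"
    using suminf_ennreal2[OF level_prob_nonneg[OF p] sS] by simp
  finally show ?thesis
    using sum_ennreal_level_prob[OF p, of "\<lambda>a. a = Return v" s v] by (simp add: success_prob_def)
qed

section \<open>Random shifts of the target\<close>

definition nat_of_bits :: "bool list \<Rightarrow> nat" where
  "nat_of_bits bs = foldl (\<lambda>a b. 2 * a + (if b then 1 else 0)) 0 bs"

lemma nat_of_bits_Nil [simp]: "nat_of_bits [] = 0"
  by (simp add: nat_of_bits_def)

lemma nat_of_bits_snoc [simp]: "nat_of_bits (bs @ [b]) = 2 * nat_of_bits bs + (if b then 1 else 0)"
  by (simp add: nat_of_bits_def)

lemma nat_of_bits_less: "nat_of_bits bs < 2 ^ length bs"
  by (induction bs rule: rev_induct) auto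

lemma nat_of_bits_inj: "inj_on nat_of_bits {bs. length bs = n}"
proof (intro inj_onI)
  fix bs cs :: "bool list"
  assume "bs \<in> {bs. length bs = n}" "cs \<in> {bs. length bs = n}" "nat_of_bits bs = nat_of_bits cs"
  then show "bs = cs"
  proof (induction bs arbitrary: cs n rule: rev_induct)
    case (snoc b bs)
    then obtain cs' c where cs: "cs = cs' @ [c]" "length cs' = length bs"
      by (cases cs rule: rev_cases) auto
    have "b = c"
      using snoc.prems cs by (auto split: if_splits; presburger)
    then show ?case
      using snoc cs by auto
  qed simp
qed

definition shift_action :: "nat \<Rightarrow> action \<Rightarrow> action" where
  "shift_action r a = (case a of Query q \<Rightarrow> Query (q - r) | Coin \<Rightarrow> Coin | Return u \<Rightarrow> Return (u - r))"

text \<open>It turns a bound on the error averaged over targets into a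
  bound for every target.\<close>
definition shift_strategy :: "(bool list \<Rightarrow> action) \<Rightarrow> nat \<Rightarrow> bool list \<Rightarrow> action" where
  "shift_strategy s j h =
     (if length h < j then Coin else shift_action (nat_of_bits (take j h)) (s (drop j h)))"

lemma step_prob_shift_action: "step_prob p v (shift_action r a) b = step_prob p (v + r) a b"
  by (cases a) (auto simp: shift_action_def step_prob_def)

lemma is_query_shift_action: "is_query (shift_action r a) = is_query a"
  by (cases a) (auto simp: shift_action_def)

lemma is_return_shift_action: "is_return (shift_action r a) = is_return a"
  by (cases a) (auto simp: shift_action_def is_return_def)

lemma shift_action_Return: "shift_action r (Return (v + r)) = Return v"
  by (simp add: shift_action_def)

lemma shift_strategy_append:
  "length bs = j \<Longrightarrow> shift_strategy s j (bs @ g) = shift_action (nat_of_bits bs) (s g)"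
  by (simp add: shift_strategy_def)

lemma reach_prob_shift_strategy_prefix:
  "length bs \<le> j \<Longrightarrow> reach_prob p (shift_strategy s j) v bs = (1/2) ^ length bs"
  by (induction bs rule: rev_induct) (simp_all add: reach_prob_snoc shift_strategy_def step_prob_def)

lemma reach_prob_shift_strategy:
  assumes "length bs = j"
  shows "reach_prob p (shift_strategy s j) v (bs @ g) = (1/2) ^ j * reach_prob p s (v + nat_of_bits bs) g"
proof (induction g rule: rev_induct)
  case Nil
  then show ?case
    using reach_prob_shift_strategy_prefix[of bs j p s v] assms by simp
next
  case (snoc b g)
  then show ?case
    using assms by (simp add: reach_prob_snoc shift_strategy_append step_prob_shift_action
        flip: append_assoc)
qed

definition shift_potential ::
    "(nat \<Rightarrow> bool list \<Rightarrow> real) \<Rightarrow> real \<Rightarrow> real \<Rightarrow> nat \<Rightarrow> nat \<Rightarrow> bool list \<Rightarrow> real" where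
  "shift_potential \<Phi> \<Phi>\<^sub>0 \<kappa> j v h =
     (if length h < j then \<Phi>\<^sub>0 + \<kappa> * (j - length h) else \<Phi> (v + nat_of_bits (take j h)) (drop j h))"

lemma shift_strategy_drift:
  assumes range: "\<And>bs. length bs = j \<Longrightarrow> v + nat_of_bits bs \<in> A"
    and drift: "\<And>x g. x \<in> A \<Longrightarrow> c (s g) + expected_next p s x (\<Phi> x) g \<le> \<Phi> x g"
    and start: "\<And>x. x \<in> A \<Longrightarrow> \<Phi> x [] = \<Phi>\<^sub>0"
    and shift_invariant: "\<And>r a. c (shift_action r a) = c a"
    and coin_cost: "c Coin = \<kappa>"
  shows "c (shift_strategy s j h)
           + expected_next p (shift_strategy s j) v (shift_potential \<Phi> \<Phi>\<^sub>0 \<kappa> j v) h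
         \<le> shift_potential \<Phi> \<Phi>\<^sub>0 \<kappa> j v h"
proof (cases "length h < j")
  case True
  have child: "shift_potential \<Phi> \<Phi>\<^sub>0 \<kappa> j v (h @ [b]) = \<Phi>\<^sub>0 + \<kappa> * (j - Suc (length h))" for b
  proof (cases "Suc (length h) < j")
    case False
    then have len: "length (h @ [b]) = j"
      using True by simp
    then show ?thesis
      using start[OF range[OF len]] by (simp add: shift_potential_def)
  qed (simp add: shift_potential_def)
  have "shift_potential \<Phi> \<Phi>\<^sub>0 \<kappa> j v h = \<Phi>\<^sub>0 + \<kappa> * (j - Suc (length h)) + \<kappa>"
    using True by (simp add: shift_potential_def Suc_diff_Suc algebra_simps)
  moreover have "shift_strategy s j h = Coin"
    using True by (simp add: shift_strategy_def)
  ultimately show ?thesis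
    unfolding expected_next_def child using coin_cost by (simp add: step_prob_def)
next
  case False
  let ?x = "v + nat_of_bits (take j h)"
  have "shift_potential \<Phi> \<Phi>\<^sub>0 \<kappa> j v (h @ [b]) = \<Phi> ?x (drop j h @ [b])" for b
    using False by (simp add: shift_potential_def)
  then show ?thesis
    using drift[of ?x "drop j h"] range[of "take j h"] False
    by (simp add: shift_strategy_def shift_potential_def expected_next_def step_prob_shift_action
        shift_invariant)
qed

lemma level_prob_shift_strategy_error:
  assumes "0 \<le> p" "p \<le> 1"
  shows "level_prob p (shift_strategy s j) v (\<lambda>a. is_return a \<and> a \<noteq> Return v) (j + K)
    \<le> (1/2) ^ j * (\<Sum>bs\<in>{h. length h = j}.
          level_prob p s (v + nat_of_bits bs) (\<lambda>a. is_return a \<and> a \<noteq> Return (v + nat_of_bits bs)) K)"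
proof -
  have "level_prob p (shift_strategy s j) v (\<lambda>a. is_return a \<and> a \<noteq> Return v) (j + K)
      = (\<Sum>bs\<in>{h. length h = j}. \<Sum>g\<in>{h. length h = K}.
          if is_return (shift_strategy s j (bs @ g)) \<and> shift_strategy s j (bs @ g) \<noteq> Return v
          then reach_prob p (shift_strategy s j) v (bs @ g) else 0)"
    unfolding level_prob_def by (rule sum_bool_lists_length_add)
  also have "\<dots> \<le> (\<Sum>bs\<in>{h. length h = j}. \<Sum>g\<in>{h. length h = K}. (1/2) ^ j *
          (if is_return (s g) \<and> s g \<noteq> Return (v + nat_of_bits bs)
           then reach_prob p s (v + nat_of_bits bs) g else 0))"
    using assms
    by (intro sum_mono)
      (auto simp: shift_strategy_append reach_prob_shift_strategy is_return_shift_action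
        shift_action_Return reach_prob_nonneg)
  also have "\<dots> = (1/2) ^ j * (\<Sum>bs\<in>{h. length h = j}.
          level_prob p s (v + nat_of_bits bs) (\<lambda>a. is_return a \<and> a \<noteq> Return (v + nat_of_bits bs)) K)"
    unfolding level_prob_def by (simp add: sum_distrib_left)
  finally show ?thesis .
qed

lemma shift_strategy_error_le:
  assumes p: "0 \<le> p" "p \<le> 1" and "finite A" and "0 \<le> \<epsilon>"
    and range: "\<And>bs. length bs = j \<Longrightarrow> v + nat_of_bits bs \<in> A"
    and average_error: "\<And>K. (\<Sum>x\<in>A. level_prob p s x (\<lambda>a. is_return a \<and> a \<noteq> Return x) K)
                               \<le> \<epsilon> * (\<Sum>x\<in>A. level_prob p s x is_return K)"
  shows "(\<Sum>N<M. level_prob p (shift_strategy s j) v (\<lambda>a. is_return a \<and> a \<noteq> Return v) N)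
           \<le> (1/2) ^ j * \<epsilon> * card A"
proof -
  let ?E = "\<lambda>s x. level_prob p s x (\<lambda>a. is_return a \<and> a \<noteq> Return x)"
  have early: "?E (shift_strategy s j) v N = 0" if "N < j" for N
    unfolding level_prob_def using that by (intro sum.neutral) (auto simp: shift_strategy_def is_return_def)
  have "(\<Sum>N<M. ?E (shift_strategy s j) v N) \<le> (\<Sum>N<j + M. ?E (shift_strategy s j) v N)"
    using level_prob_nonneg[OF p] by (intro sum_mono2) auto
  also have "\<dots> = (\<Sum>K<M. ?E (shift_strategy s j) v (j + K))"
    by (induction M) (simp_all add: early)
  also have "\<dots> \<le> (\<Sum>K<M. (1/2) ^ j * (\<Sum>bs\<in>{h. length h = j}. ?E s (v + nat_of_bits bs) K))"
    by (intro sum_mono level_prob_shift_strategy_error[OF p])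
  also have "\<dots> = (1/2) ^ j * (\<Sum>x\<in>(\<lambda>bs. v + nat_of_bits bs) ` {h. length h = j}. \<Sum>K<M. ?E s x K)"
  proof -
    have "inj_on (\<lambda>bs. v + nat_of_bits bs) {h. length h = j}"
      using nat_of_bits_inj by (auto simp: inj_on_def)
    then show ?thesis
      by (simp add: sum.reindex sum_distrib_left sum.swap[of _ "{..<M}"])
  qed
  also have "\<dots> \<le> (1/2) ^ j * (\<Sum>x\<in>A. \<Sum>K<M. ?E s x K)"
    using range \<open>finite A\<close> level_prob_nonneg[OF p]
    by (intro mult_left_mono sum_mono2) (auto intro: sum_nonneg)
  also have "\<dots> = (1/2) ^ j * (\<Sum>K<M. \<Sum>x\<in>A. ?E s x K)"
    by (simp add: sum.swap[of _ A])
  also have "\<dots> \<le> (1/2) ^ j * (\<Sum>K<M. \<epsilon> * (\<Sum>x\<in>A. level_prob p s x is_return K))"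
    by (intro mult_left_mono sum_mono average_error) simp
  also have "\<dots> = (1/2) ^ j * \<epsilon> * (\<Sum>x\<in>A. \<Sum>K<M. level_prob p s x is_return K)"
    by (simp add: sum_distrib_left sum.swap[of _ A] mult.assoc)
  also have "\<dots> \<le> (1/2) ^ j * \<epsilon> * (\<Sum>x\<in>A. 1)"
    using \<open>0 \<le> \<epsilon>\<close> sum_level_prob_is_return_le_1[OF p]
    by (intro mult_left_mono sum_mono) auto
  finally show ?thesis
    by simp
qed

section \<open>Capacity of the binary symmetric channel\<close>

lemma capacity_eq_ln:
  "0 < p \<Longrightarrow> p < 1 \<Longrightarrow> capacity p = 1 + (p * ln p + (1 - p) * ln (1 - p)) / ln 2"
  unfolding capacity_def bin_entropy_def log_def by (simp add: field_simps)

lemma ln_less_minus_one: "0 < x \<Longrightarrow> x \<noteq> 1 \<Longrightarrow> ln x < x - 1" for x :: real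
proof -
  assume x: "0 < x" "x \<noteq> 1"
  have "ln x = 2 * ln (sqrt x)"
    using x by (simp add: ln_sqrt)
  also have "\<dots> \<le> 2 * (sqrt x - 1)"
    using x ln_le_minus_one[of "sqrt x"] by simp
  also have "\<dots> < x - 1"
  proof -
    have "0 < (sqrt x - 1)\<^sup>2"
      using x by simp
    then show ?thesis
      using x by (simp add: power2_diff)
  qed
  finally show ?thesis .
qed

lemma capacity_pos:
  assumes "0 < p" "p < 1/2"
  shows "0 < capacity p"
proof -
  have "ln (1 / (2 * p)) < 1 / (2 * p) - 1"
    using assms by (intro ln_less_minus_one) auto
  moreover have "ln (1 / (2 * p)) = - ln 2 - ln p"
    using assms by (simp add: ln_div ln_mult_pos)
  ultimately have strict: "p * (- ln 2 - ln p) < p * (1 / (2 * p) - 1)"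
    using assms by simp
  have "ln (1 / (2 * (1 - p))) \<le> 1 / (2 * (1 - p)) - 1"
    using assms by (intro ln_le_minus_one) auto
  moreover have "ln (1 / (2 * (1 - p))) = - ln 2 - ln (1 - p)"
    using assms ln_mult_pos[of 2 "1 - p"] by (simp add: ln_div)
  ultimately have "(1 - p) * (- ln 2 - ln (1 - p)) \<le> (1 - p) * (1 / (2 * (1 - p)) - 1)"
    using assms by (intro mult_left_mono) auto
  moreover have "p * (1 / (2 * p) - 1) + (1 - p) * (1 / (2 * (1 - p)) - 1) = 0"
    using assms by (simp add: field_simps)
  ultimately have "- ln 2 < p * ln p + (1 - p) * ln (1 - p)"
    using strict by (simp add: algebra_simps)
  then have "0 < (capacity p - 1) * ln 2 + ln 2"
    using assms capacity_eq_ln[of p] by simp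
  then show ?thesis
    by (simp add: algebra_simps zero_less_mult_iff)
qed

lemma noise_factor_le:
  fixes p :: real
  assumes "0 < p" "p < 1/2"
  shows "(1 - 2*p)\<^sup>2 / ln 2 \<le> 3/2"
proof -
  have "(1 - 2*p)\<^sup>2 \<le> 1"
    using assms by (simp add: power_le_one_iff abs_le_iff)
  then have "(1 - 2*p)\<^sup>2 / ln 2 \<le> 1 / ln 2"
    by (simp add: divide_right_mono)
  also have "\<dots> \<le> 3/2"
    using ln2_ge_two_thirds by (simp add: field_simps)
  finally show ?thesis .
qed

lemma odds_factors_ge:
  fixes p u :: real
  assumes p: "0 < p" "p < 1/2" and u: "0 \<le> u" "u \<le> 1"
  shows "p / (1 - p) \<le> 1 - u * (1 - 2*p) / (1 - p)" and "p / (1 - p) \<le> 1 + u * (1 - 2*p) / p"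
proof -
  have "u * (1 - 2*p) / (1 - p) \<le> (1 - 2*p) / (1 - p)"
    using u p by (intro divide_right_mono) (auto simp: mult_le_cancel_right1)
  then show "p / (1 - p) \<le> 1 - u * (1 - 2*p) / (1 - p)"
    using p by (simp add: field_simps)
  have "p / (1 - p) \<le> 1" "0 \<le> u * (1 - 2*p) / p"
    using u p by simp_all
  then show "p / (1 - p) \<le> 1 + u * (1 - 2*p) / p"
    by simp
qed

text \<open>The heart of the drift estimate: a query whose far side carries the fraction \<open>u\<close> of
  the mass of the wrong candidates multiplies their odds by the two factors below, with
  probabilities \<open>1 - p\<close> and \<open>p\<close>. Both logarithms are bounded through \<open>ln y \<le> y - 1\<close> after
  rescaling by \<open>2 (1 - p)\<close> and \<open>2 p\<close>; the linear remainders add up to \<open>(1 - 2p)\<^sup>2 (1 - 2u)\<close>.\<close>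
lemma expected_log_odds_factor_le:
  fixes p u :: real
  assumes p: "0 < p" "p < 1/2" and u: "0 \<le> u" "u \<le> 1"
  shows "(1 - p) * log 2 (1 - u * (1 - 2*p) / (1 - p)) + p * log 2 (1 + u * (1 - 2*p) / p)
         \<le> - capacity p + (1 - 2*p)\<^sup>2 * (1 - 2*u) / ln 2"
proof -
  define a where "a = 1 - u * (1 - 2*p) / (1 - p)"
  define b where "b = 1 + u * (1 - 2*p) / p"
  have "u * (1 - 2*p) \<le> 1 - 2*p"
    using u p by (simp add: mult_left_le_one_le)
  then have a_pos: "0 < a"
    using p by (simp add: a_def field_simps)
  have b_pos: "0 < b"
    using p u by (simp add: b_def add_pos_nonneg)
  have "ln (2 * (1 - p) * a) \<le> 2 * (1 - p) * a - 1"
    using a_pos p by (intro ln_le_minus_one) simp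
  moreover have "ln (2 * (1 - p) * a) = ln 2 + ln (1 - p) + ln a"
    using a_pos p ln_mult_pos[of "2 * (1 - p)" a] ln_mult_pos[of 2 "1 - p"] by simp
  ultimately have ln_a: "ln a \<le> - ln 2 - ln (1 - p) + (2 * (1 - p) * a - 1)"
    by simp
  have "ln (2 * p * b) \<le> 2 * p * b - 1"
    using b_pos p by (intro ln_le_minus_one) simp
  moreover have "ln (2 * p * b) = ln 2 + ln p + ln b"
    using b_pos p ln_mult_pos[of "2 * p" b] ln_mult_pos[of 2 p] by simp
  ultimately have ln_b: "ln b \<le> - ln 2 - ln p + (2 * p * b - 1)"
    by simp
  have remainder: "(1 - p) * (2 * (1 - p) * a - 1) + p * (2 * p * b - 1) = (1 - 2*p)\<^sup>2 * (1 - 2*u)"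
    using p unfolding a_def b_def by (simp add: field_simps power2_eq_square)
  have "(1 - p) * ln a + p * ln b
      \<le> (1 - p) * (- ln 2 - ln (1 - p) + (2 * (1 - p) * a - 1)) + p * (- ln 2 - ln p + (2 * p * b - 1))"
    using ln_a ln_b p by (intro add_mono mult_left_mono) auto
  also have "\<dots> = - ln 2 - (p * ln p + (1 - p) * ln (1 - p)) + (1 - 2*p)\<^sup>2 * (1 - 2*u)"
    using remainder by (simp add: algebra_simps)
  finally have ln_bound: "(1 - p) * ln a + p * ln b
      \<le> - ln 2 - (p * ln p + (1 - p) * ln (1 - p)) + (1 - 2*p)\<^sup>2 * (1 - 2*u)" .
  have "(1 - p) * log 2 a + p * log 2 b = ((1 - p) * ln a + p * ln b) / ln 2"
    by (simp add: log_def field_simps)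
  also have "\<dots> \<le> (- ln 2 - (p * ln p + (1 - p) * ln (1 - p)) + (1 - 2*p)\<^sup>2 * (1 - 2*u)) / ln 2"
    using ln_bound by (simp add: divide_right_mono)
  also have "\<dots> = - capacity p + (1 - 2*p)\<^sup>2 * (1 - 2*u) / ln 2"
    using capacity_eq_ln[of p] p by (simp add: field_simps)
  finally show ?thesis
    unfolding a_def b_def .
qed

section \<open>Randomly rounded weighted medians\<close>

lemma sum_lessThan_if_less:
  fixes a b :: real and N K :: nat
  assumes "N \<le> K"
  shows "(\<Sum>c<K. if c < N then a else b) = N * a + (K - real N) * b"
proof -
  have "{..<K} \<inter> {c. c < N} = {..<N}" "{..<K} \<inter> - {c. c < N} = {N..<K}"
    using assms by auto
  then have "(\<Sum>c<K. if c < N then a else b) = (\<Sum>c<N. a) + (\<Sum>c\<in>{N..<K}. b)"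
    by (subst sum.If_cases) simp_all
  then show ?thesis
    using assms by (simp add: of_nat_diff)
qed

lemma mean_threshold_mixture_ge:
  fixes a b Z l :: real and K :: nat
  assumes "0 < K" "0 \<le> l" "l \<le> 1" "0 \<le> a" "a \<le> Z" "0 \<le> b" "b \<le> Z"
  shows "l * a + (1 - l) * b - Z / K \<le> (\<Sum>c<K. if real c < K * l then a else b) / K"
proof -
  define N where "N = nat \<lceil>K * l\<rceil>"
  have N_le: "N \<le> K"
    using assms unfolding N_def by (simp add: ceiling_le_iff nat_le_iff mult_left_le)
  have "0 \<le> K * l"
    using assms by simp
  then have N_bounds: "K * l \<le> N" "N < K * l + 1"
    unfolding N_def by linarith+
  have "real c < K * l \<longleftrightarrow> c < N" for c :: nat
    unfolding N_def by linarith
  then have "(\<Sum>c<K. if real c < K * l then a else b) = N * a + (K - real N) * b"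
    using sum_lessThan_if_less[OF N_le] by simp
  then have mean: "(\<Sum>c<K. if real c < K * l then a else b) / K
      = l * a + (1 - l) * b + (N / K - l) * (a - b)"
    using assms(1) by (simp add: field_simps)
  have "N / K - l = (N - K * l) / K"
    using assms(1) by (simp add: field_simps)
  then have t: "0 \<le> N / K - l" "N / K - l \<le> 1 / K"
    using N_bounds by (simp_all add: divide_right_mono)
  have "(N / K - l) * (- Z) \<le> (N / K - l) * (a - b)"
    by (rule mult_left_mono) (use t assms in auto)
  moreover have "1 / K * (- Z) \<le> (N / K - l) * (- Z)"
    by (rule mult_right_mono_neg) (use t assms in auto)
  ultimately have "- Z / K \<le> (N / K - l) * (a - b)"
    by simp
  then show ?thesis
    unfolding mean by simp
qed

definition bayes_update :: "real \<Rightarrow> (nat \<Rightarrow> real) \<Rightarrow> nat \<Rightarrow> bool \<Rightarrow> nat \<Rightarrow> real" where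
  "bayes_update p W q b = (\<lambda>y. W y * (if b = (y < q) then 1 - p else p))"

locale weight_vectors =
  fixes D :: nat
  assumes two_le_D: "2 \<le> D"
begin

definition mass :: "(nat \<Rightarrow> real) \<Rightarrow> real" where
  "mass W = (\<Sum>y\<in>{1..D}. W y)"

definition mass_below :: "(nat \<Rightarrow> real) \<Rightarrow> nat \<Rightarrow> real" where
  "mass_below W q = (\<Sum>y\<in>{1..D}. if y < q then W y else 0)"

definition mass_from :: "(nat \<Rightarrow> real) \<Rightarrow> nat \<Rightarrow> real" where
  "mass_from W q = (\<Sum>y\<in>{1..D}. if y < q then 0 else W y)"

definition mass_opposite :: "(nat \<Rightarrow> real) \<Rightarrow> nat \<Rightarrow> nat \<Rightarrow> real" where
  "mass_opposite W x q = (if x < q then mass_from W q else mass_below W q)"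

lemma mass_below_plus_mass_from: "mass_below W q + mass_from W q = mass W"
  unfolding mass_below_def mass_from_def mass_def sum.distrib[symmetric] by (intro sum.cong) auto

lemma mass_below_Suc: "mass_below W (Suc q) = mass_below W q + (if q \<in> {1..D} then W q else 0)"
proof -
  have "mass_below W (Suc q) = (\<Sum>y\<in>{1..D}. (if y < q then W y else 0) + (if y = q then W y else 0))"
    unfolding mass_below_def by (intro sum.cong) auto
  then show ?thesis
    by (simp add: sum.distrib mass_below_def)
qed

lemma mass_below_beyond: "D < q \<Longrightarrow> mass_below W q = mass W"
  unfolding mass_below_def mass_def by (intro sum.cong) auto

definition median :: "(nat \<Rightarrow> real) \<Rightarrow> nat" where
  "median W = (LEAST q. mass W \<le> 2 * mass_below W (Suc q))"

text \<open>Querying at \<open>median W\<close> with probability \<open>split_prob W\<close> and at \<open>Suc (median W)\<close> otherwise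
  puts exactly half of the mass below the query point in expectation.\<close>
definition split_prob :: "(nat \<Rightarrow> real) \<Rightarrow> real" where
  "split_prob W = (mass_below W (median W) + W (median W) - mass W / 2) / W (median W)"

definition query_point :: "nat \<Rightarrow> (nat \<Rightarrow> real) \<Rightarrow> nat \<Rightarrow> nat" where
  "query_point K W c = (if real c < K * split_prob W then median W else Suc (median W))"

context
  fixes W :: "nat \<Rightarrow> real"
  assumes W_pos: "\<And>y. 0 < W y"
begin

lemma mass_pos: "0 < mass W"
  unfolding mass_def using two_le_D W_pos by (intro sum_pos) auto

lemma mass_minus_pos: "x \<in> {1..D} \<Longrightarrow> 0 < mass W - W x"
proof -
  assume x: "x \<in> {1..D}"
  have "\<exists>y\<in>{1..D}. y \<noteq> x"
  proof (cases "x = 1")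
    case True
    then show ?thesis
      using two_le_D by (intro bexI[of _ 2]) auto
  next
    case False
    then show ?thesis
      using two_le_D by (intro bexI[of _ 1]) auto
  qed
  then obtain y where y: "y \<in> {1..D} - {x}"
    by blast
  have "W y \<le> (\<Sum>z\<in>{1..D} - {x}. W z)"
    using y W_pos by (intro member_le_sum) (auto simp: less_imp_le)
  moreover have "mass W = W x + (\<Sum>z\<in>{1..D} - {x}. W z)"
    unfolding mass_def using x by (simp add: sum.remove)
  ultimately show ?thesis
    using W_pos[of y] by simp
qed

lemma mass_opposite_nonneg: "0 \<le> mass_opposite W x q"
  unfolding mass_opposite_def mass_below_def mass_from_def
  using W_pos by (auto intro!: sum_nonneg simp: less_imp_le)

lemma mass_opposite_le: "x \<in> {1..D} \<Longrightarrow> mass_opposite W x q \<le> mass W - W x"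
proof -
  assume x: "x \<in> {1..D}"
  have "W x \<le> mass_below W q" if "x < q"
    unfolding mass_below_def using member_le_sum[of x "{1..D}" "\<lambda>y. if y < q then W y else 0"] x that W_pos
    by (simp add: less_imp_le)
  moreover have "W x \<le> mass_from W q" if "\<not> x < q"
    unfolding mass_from_def using member_le_sum[of x "{1..D}" "\<lambda>y. if y < q then 0 else W y"] x that W_pos
    by (simp add: less_imp_le)
  ultimately show ?thesis
    using mass_below_plus_mass_from[of W q] by (auto simp: mass_opposite_def)
qed

lemma median_props:
  shows mass_le_twice_below_Suc_median: "mass W \<le> 2 * mass_below W (Suc (median W))"
    and twice_below_median_less_mass: "2 * mass_below W (median W) < mass W"
    and median_mem: "median W \<in> {1..D}"
proof -
  let ?P = "\<lambda>q. mass W \<le> 2 * mass_below W (Suc q)"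
  have ex: "?P D"
    using mass_below_beyond[of "Suc D" W] mass_pos by simp
  show P: "?P (median W)"
    unfolding median_def by (rule LeastI[of ?P, OF ex])
  have le: "median W \<le> D"
    unfolding median_def by (rule Least_le[of ?P, OF ex])
  show less: "2 * mass_below W (median W) < mass W"
  proof (cases "median W")
    case 0
    then show ?thesis
      using mass_pos by (simp add: mass_below_def)
  next
    case (Suc m)
    then have "\<not> ?P m"
      using not_less_Least[of m ?P] unfolding median_def by simp
    then show ?thesis
      using Suc by simp
  qed
  have "mass_below W (Suc 0) = 0"
    by (simp add: mass_below_def)
  then have "median W \<noteq> 0"
    using P mass_pos by (intro notI) simp
  then show "median W \<in> {1..D}"
    using le by simp
qed

lemma mass_below_Suc_median: "mass_below W (Suc (median W)) = mass_below W (median W) + W (median W)"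
  using mass_below_Suc[of W "median W"] median_mem by simp

lemma split_prob_nonneg: "0 \<le> split_prob W"
  using mass_le_twice_below_Suc_median mass_below_Suc_median W_pos[of "median W"]
  unfolding split_prob_def by simp

lemma split_prob_le_1: "split_prob W \<le> 1"
  using twice_below_median_less_mass mass_below_Suc_median W_pos[of "median W"]
  unfolding split_prob_def by simp

lemma split_prob_times_weight:
  "split_prob W * W (median W) = mass_below W (median W) + W (median W) - mass W / 2"
  using W_pos[of "median W"] by (simp add: split_prob_def)

lemma split_prob_opposite_eq_half:
  assumes "x \<noteq> median W"
  shows "split_prob W * mass_opposite W x (median W) + (1 - split_prob W) * mass_opposite W x (Suc (median W))
           = mass W / 2"
proof -
  define m A M Z where "m = median W" and "A = mass_below W m" and "M = W m" and "Z = mass W"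
  have split: "split_prob W * M = A + M - Z / 2"
    using split_prob_times_weight by (simp add: A_def M_def Z_def m_def)
  have below: "mass_below W (Suc m) = A + M"
    using mass_below_Suc_median by (simp add: A_def M_def m_def)
  consider "x < m" | "m < x"
    using assms unfolding m_def by (meson linorder_neqE_nat)
  then show ?thesis
  proof cases
    case 1
    have "mass_from W m = Z - A" "mass_from W (Suc m) = Z - A - M"
      using mass_below_plus_mass_from[of W m] mass_below_plus_mass_from[of W "Suc m"] below
      by (simp_all add: A_def Z_def)
    moreover have "split_prob W * (Z - A) + (1 - split_prob W) * (Z - A - M) = Z - A - M + split_prob W * M"
      by (simp add: algebra_simps)
    ultimately show ?thesis
      using 1 split by (simp add: mass_opposite_def m_def Z_def)
  next
    case 2
    have "split_prob W * A + (1 - split_prob W) * (A + M) = A + M - split_prob W * M"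
      by (simp add: algebra_simps)
    then show ?thesis
      using 2 below split by (simp add: mass_opposite_def A_def m_def Z_def)
  qed
qed

text \<open>Multiplied by the weight of the median, the excess of the right-hand side over the left
  is a square.\<close>
lemma split_prob_opposite_median_ge:
  "(mass W - W (median W)) / 2 \<le> split_prob W * mass_below W (median W)
     + (1 - split_prob W) * mass_from W (Suc (median W))"
proof -
  define m A M Z where "m = median W" and "A = mass_below W m" and "M = W m" and "Z = mass W"
  have M_pos: "0 < M"
    using W_pos by (simp add: M_def)
  have split: "split_prob W * M = A + M - Z / 2"
    using split_prob_times_weight by (simp add: A_def M_def Z_def m_def)
  have from_Suc: "mass_from W (Suc m) = Z - A - M"
    using mass_below_plus_mass_from[of W "Suc m"] mass_below_Suc_median by (simp add: A_def M_def Z_def m_def)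
  have "M * ((split_prob W * A + (1 - split_prob W) * (Z - A - M)) - (Z - M) / 2)
      = M * (Z - 2 * A - M) / 2 + split_prob W * M * (2 * A + M - Z)"
    by (simp add: field_simps)
  also have "\<dots> = 2 * (Z / 2 - A - M / 2)\<^sup>2"
    unfolding split by (simp add: field_simps power2_eq_square)
  finally have "0 \<le> M * ((split_prob W * A + (1 - split_prob W) * (Z - A - M)) - (Z - M) / 2)"
    by simp
  then have "(Z - M) / 2 \<le> split_prob W * A + (1 - split_prob W) * (Z - A - M)"
    using M_pos by (simp add: zero_le_mult_iff)
  then show ?thesis
    using from_Suc by (simp add: A_def m_def M_def Z_def)
qed

lemma split_prob_opposite_ge:
  "(mass W - W x) / 2 \<le> split_prob W * mass_opposite W x (median W)
     + (1 - split_prob W) * mass_opposite W x (Suc (median W))"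
proof (cases "x = median W")
  case True
  then show ?thesis
    using split_prob_opposite_median_ge by (simp add: mass_opposite_def)
next
  case False
  then show ?thesis
    using split_prob_opposite_eq_half W_pos[of x] by simp
qed

lemma mean_mass_opposite_query_point_ge:
  assumes x: "x \<in> {1..D}" and K: "0 < K"
  shows "(mass W - W x) * (1/2 - 1/K) \<le> (\<Sum>c<K. mass_opposite W x (query_point K W c)) / K"
proof -
  let ?opp = "mass_opposite W x" and ?l = "split_prob W"
  have "(mass W - W x) * (1/2 - 1/K) = (mass W - W x) / 2 - (mass W - W x) / K"
    by (simp add: right_diff_distrib)
  also have "\<dots> \<le> ?l * ?opp (median W) + (1 - ?l) * ?opp (Suc (median W)) - (mass W - W x) / K"
    using split_prob_opposite_ge by simp
  also have "\<dots> \<le> (\<Sum>c<K. if real c < K * ?l then ?opp (median W) else ?opp (Suc (median W))) / K"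
    using K split_prob_nonneg split_prob_le_1 mass_opposite_nonneg
      mass_opposite_le[OF x]
    by (intro mean_threshold_mixture_ge) auto
  also have "\<dots> = (\<Sum>c<K. ?opp (query_point K W c)) / K"
    by (simp add: query_point_def if_distrib)
  finally show ?thesis .
qed

end

lemma mass_bayes_update:
  "mass (bayes_update p W q b) =
     (if b = (x < q) then (1 - p) * (mass W - mass_opposite W x q) + p * mass_opposite W x q
      else p * (mass W - mass_opposite W x q) + (1 - p) * mass_opposite W x q)"
proof -
  have update: "mass (bayes_update p W q b) =
      (if b then (1 - p) * mass_below W q + p * mass_from W q else p * mass_below W q + (1 - p) * mass_from W q)"
    unfolding mass_def bayes_update_def mass_below_def mass_from_def
    by (auto simp: sum_distrib_left sum.distrib[symmetric] intro!: sum.cong)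
  have from_eq: "mass_from W q = mass W - mass_below W q"
    using mass_below_plus_mass_from[of W q] by simp
  show ?thesis
    unfolding update by (simp add: mass_opposite_def from_eq algebra_simps)
qed

end

section \<open>The Bayesian search\<close>

lemma length_snoc_div_mod:
  fixes g :: "bool list" and k :: nat
  shows "length g mod (k + 1) < k \<Longrightarrow>
           length (g @ [b]) div (k + 1) = length g div (k + 1) \<and>
           length (g @ [b]) mod (k + 1) = Suc (length g mod (k + 1))"
    and "length g mod (k + 1) = k \<Longrightarrow>
           length (g @ [b]) div (k + 1) = Suc (length g div (k + 1)) \<and>
           length (g @ [b]) mod (k + 1) = 0"
  by (auto simp: div_Suc mod_Suc)

locale noisy_search = weight_vectors D for D +
  fixes p :: real and k :: nat and \<epsilon> :: real
  assumes p_pos: "0 < p" and p_less_half: "p < 1/2" and k_pos: "1 \<le> k"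
    and eps_pos: "0 < \<epsilon>" and eps_less_half: "\<epsilon> < 1/2"
begin

text \<open>A run is cut into rounds of \<open>k + 1\<close> bits: \<open>k\<close> fair coins, read as a number below \<open>2 ^ k\<close>
  that rounds the median randomly, followed by the answer to one query. The candidate weights
  are the likelihoods of the answers received so far (the posterior of a uniform prior).\<close>
definition coin_value :: "bool list \<Rightarrow> nat \<Rightarrow> nat" where
  "coin_value g t = nat_of_bits (take k (drop (t * (k + 1)) g))"

primrec weights :: "bool list \<Rightarrow> nat \<Rightarrow> nat \<Rightarrow> real" where
  "weights g 0 = (\<lambda>_. 1)"
| "weights g (Suc t) = bayes_update p (weights g t)
     (query_point (2 ^ k) (weights g t) (coin_value g t)) (g ! (t * (k + 1) + k))"

definition confident :: "(nat \<Rightarrow> real) \<Rightarrow> bool" where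
  "confident W = (\<exists>u\<in>{1..D}. (1 - \<epsilon>) * mass W \<le> W u)"

definition leader :: "(nat \<Rightarrow> real) \<Rightarrow> nat" where
  "leader W = (SOME u. u \<in> {1..D} \<and> (1 - \<epsilon>) * mass W \<le> W u)"

definition search :: "bool list \<Rightarrow> action" where
  "search g = (let t = length g div (k + 1); r = length g mod (k + 1); W = weights g t in
     if r = 0 \<and> confident W then Return (leader W)
     else if r < k then Coin
     else Query (query_point (2 ^ k) W (coin_value g t)))"

lemma weights_pos: "0 < weights g t y"
  using p_pos p_less_half by (induction t) (auto simp: bayes_update_def)

lemma leader_props:
  assumes "confident W"
  shows "leader W \<in> {1..D}" "(1 - \<epsilon>) * mass W \<le> W (leader W)"
proof -
  have "\<exists>u. u \<in> {1..D} \<and> (1 - \<epsilon>) * mass W \<le> W u"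
    using assms by (auto simp: confident_def)
  from someI_ex[OF this] show "leader W \<in> {1..D}" "(1 - \<epsilon>) * mass W \<le> W (leader W)"
    unfolding leader_def by auto
qed

lemma coin_value_append: "t * (k + 1) + k \<le> length g \<Longrightarrow> coin_value (g @ h) t = coin_value g t"
  by (simp add: coin_value_def algebra_simps)

lemma weights_append: "t * (k + 1) \<le> length g \<Longrightarrow> weights (g @ h) t = weights g t"
proof (induction t)
  case (Suc t)
  then show ?case
    by (simp add: coin_value_append nth_append)
qed simp

lemma search_Coin:
  "search g = Coin \<Longrightarrow> length g mod (k + 1) < k"
  unfolding search_def Let_def by (auto split: if_splits)

lemma search_Query:
  assumes "search g = Query q"
  shows "length g mod (k + 1) = k"
    and "q = query_point (2 ^ k) (weights g (length g div (k + 1))) (coin_value g (length g div (k + 1)))"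
proof -
  have "\<not> length g mod (k + 1) < k \<Longrightarrow> length g mod (k + 1) = k"
    using mod_less_divisor[of "k + 1" "length g"] by linarith
  then show "length g mod (k + 1) = k"
    and "q = query_point (2 ^ k) (weights g (length g div (k + 1))) (coin_value g (length g div (k + 1)))"
    using assms unfolding search_def Let_def by (auto split: if_splits)
qed

lemma search_Return:
  assumes "search g = Return u"
  shows "length g mod (k + 1) = 0"
    and "confident (weights g (length g div (k + 1)))"
    and "u = leader (weights g (length g div (k + 1)))"
  using assms unfolding search_def Let_def by (auto split: if_splits)

lemma weights_snoc_Coin:
  assumes "length g mod (k + 1) < k"
  shows "weights (g @ [b]) (length (g @ [b]) div (k + 1)) = weights g (length g div (k + 1))"
  using assms length_snoc_div_mod(1)[OF assms] div_mult_mod_eq[of "length g" "k + 1"]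
  by (simp add: weights_append[where h = "[b]"] del: length_append_singleton)

lemma weights_snoc_Query:
  assumes "length g mod (k + 1) = k"
  shows "weights (g @ [b]) (length (g @ [b]) div (k + 1)) =
           bayes_update p (weights g (length g div (k + 1)))
             (query_point (2 ^ k) (weights g (length g div (k + 1))) (coin_value g (length g div (k + 1)))) b"
proof -
  let ?t = "length g div (k + 1)"
  have len: "length g = ?t * (k + 1) + k"
    using div_mult_mod_eq[of "length g" "k + 1"] assms by simp
  have "length (g @ [b]) div (k + 1) = Suc ?t"
    using length_snoc_div_mod(2)[OF assms] by blast
  moreover have "coin_value (g @ [b]) ?t = coin_value g ?t" "weights (g @ [b]) ?t = weights g ?t"
    using len by (simp_all add: coin_value_append weights_append)
  moreover have "(g @ [b]) ! (?t * (k + 1) + k) = b"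
    using len by (simp add: nth_append)
  ultimately show ?thesis
    by simp
qed

definition coin_factor :: "action \<Rightarrow> real" where
  "coin_factor a = (case a of Query _ \<Rightarrow> 1 | Coin \<Rightarrow> 1/2 | Return _ \<Rightarrow> 0)"

definition coin_prob :: "bool list \<Rightarrow> real" where
  "coin_prob g = (\<Prod>i<length g. coin_factor (search (take i g)))"

lemma coin_prob_nonneg: "0 \<le> coin_prob g"
  unfolding coin_prob_def coin_factor_def by (intro prod_nonneg) (auto split: action.split)

lemma reach_prob_search: "reach_prob p search x g = coin_prob g * weights g (length g div (k + 1)) x"
proof (induction g rule: rev_induct)
  case Nil
  then show ?case
    by (simp add: coin_prob_def)
next
  case (snoc b g)
  have coin_prob_snoc: "coin_prob (g @ [b]) = coin_prob g * coin_factor (search g)"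
    unfolding coin_prob_def by (simp add: lessThan_Suc)
  show ?case
  proof (cases "search g")
    case (Query q)
    then show ?thesis
      using snoc.IH search_Query[OF Query] weights_snoc_Query[of g b]
      by (simp add: reach_prob_snoc coin_prob_snoc coin_factor_def step_prob_def bayes_update_def)
  next
    case Coin
    then show ?thesis
      using snoc.IH weights_snoc_Coin[OF search_Coin[OF Coin], of b]
      by (simp add: reach_prob_snoc coin_prob_snoc coin_factor_def step_prob_def)
  next
    case (Return u)
    then show ?thesis
      by (simp add: reach_prob_snoc coin_prob_snoc coin_factor_def step_prob_def)
  qed
qed

section \<open>The log-odds potential\<close>

definition odds :: "(nat \<Rightarrow> real) \<Rightarrow> nat \<Rightarrow> real" where
  "odds W x = (mass W - W x) / W x"

definition log_odds_offset :: real where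
  "log_odds_offset = log 2 ((1 - \<epsilon>) / \<epsilon>) + log 2 ((1 - p) / p)"

text \<open>The offset makes the truncation at \<open>0\<close> inactive after every query asked in a state
  without a confident candidate: there the odds exceed \<open>\<epsilon> / (1 - \<epsilon>)\<close>, and a single answer
  shrinks them by a factor of at most \<open>p / (1 - p)\<close>.\<close>
definition round_potential :: "nat \<Rightarrow> (nat \<Rightarrow> real) \<Rightarrow> real" where
  "round_potential x W = max 0 (log 2 (odds W x) + log_odds_offset)"

definition drift_rate :: real where
  "drift_rate = capacity p - 4 / 2 ^ k"

definition query_potential :: "nat \<Rightarrow> (nat \<Rightarrow> real) \<Rightarrow> nat \<Rightarrow> real" where
  "query_potential x W c = drift_rate
     + step_prob p x (Query (query_point (2 ^ k) W c)) True
         * round_potential x (bayes_update p W (query_point (2 ^ k) W c) True)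
     + step_prob p x (Query (query_point (2 ^ k) W c)) False
         * round_potential x (bayes_update p W (query_point (2 ^ k) W c) False)"

lemma round_potential_nonneg: "0 \<le> round_potential x W"
  by (simp add: round_potential_def)

lemma log_odds_offset_le: "log_odds_offset \<le> log 2 (1 / \<epsilon>) + log 2 ((1 - p) / p)"
  using eps_pos eps_less_half by (simp add: log_odds_offset_def divide_right_mono)

context
  fixes W :: "nat \<Rightarrow> real" and x :: nat
  assumes W_pos: "\<And>y. 0 < W y" and x: "x \<in> {1..D}"
begin

lemma odds_pos: "0 < odds W x"
  using mass_minus_pos[where W = W, OF W_pos x] W_pos[of x] by (simp add: odds_def)

lemma odds_bayes_update:
  fixes q :: nat
  defines "u \<equiv> mass_opposite W x q / (mass W - W x)"
  shows "odds (bayes_update p W q (x < q)) x = odds W x * (1 - u * (1 - 2*p) / (1 - p))"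
    and "odds (bayes_update p W q (\<not> x < q)) x = odds W x * (1 + u * (1 - 2*p) / p)"
proof -
  define X Y S where "X = W x" and "Y = mass W - W x" and "S = mass_opposite W x q"
  have pos: "0 < X" "0 < Y"
    using W_pos mass_minus_pos[where W = W, OF W_pos x] by (simp_all add: X_def Y_def)
  have mass: "mass W = X + Y"
    by (simp add: X_def Y_def)
  have u: "u = S / Y"
    by (simp add: u_def S_def Y_def)
  have "1 - p \<noteq> 0"
    using p_less_half by simp
  then show "odds (bayes_update p W q (x < q)) x = odds W x * (1 - u * (1 - 2*p) / (1 - p))"
    unfolding odds_def mass_bayes_update[of p W q "x < q" x] u
    using pos p_pos by (simp add: bayes_update_def field_simps mass flip: X_def S_def)
  show "odds (bayes_update p W q (\<not> x < q)) x = odds W x * (1 + u * (1 - 2*p) / p)"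
    unfolding odds_def mass_bayes_update[of p W q "\<not> x < q" x] u
    using pos p_pos by (simp add: bayes_update_def field_simps mass flip: X_def S_def)
qed

lemma log_odds_offset_bound:
  assumes "\<not> confident W" and c: "p / (1 - p) \<le> c"
  shows "0 \<le> log 2 (odds W x * c) + log_odds_offset"
proof -
  have "W x < (1 - \<epsilon>) * mass W"
    using assms x by (auto simp: confident_def not_le)
  then have "\<epsilon> / (1 - \<epsilon>) < odds W x"
    using eps_pos eps_less_half W_pos[of x] by (simp add: odds_def field_simps)
  then have "\<epsilon> / (1 - \<epsilon>) * (p / (1 - p)) \<le> odds W x * c"
    using c eps_pos eps_less_half p_pos p_less_half odds_pos by (intro mult_mono) auto
  moreover have "0 < \<epsilon> / (1 - \<epsilon>) * (p / (1 - p))"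
    using eps_pos eps_less_half p_pos p_less_half by simp
  ultimately have "log 2 (\<epsilon> / (1 - \<epsilon>) * (p / (1 - p))) \<le> log 2 (odds W x * c)"
    by simp
  moreover have "log 2 (\<epsilon> / (1 - \<epsilon>) * (p / (1 - p))) = - log_odds_offset"
    using eps_pos eps_less_half p_pos p_less_half
    by (simp add: log_odds_offset_def log_mult log_divide)
  ultimately show ?thesis
    by simp
qed

lemma expected_round_potential_le:
  assumes "\<not> confident W"
  shows "step_prob p x (Query q) True * round_potential x (bayes_update p W q True)
       + step_prob p x (Query q) False * round_potential x (bayes_update p W q False)
       \<le> log 2 (odds W x) + log_odds_offset - capacity p
         + (1 - 2*p)\<^sup>2 * (1 - 2 * (mass_opposite W x q / (mass W - W x))) / ln 2"
proof -
  define u where "u = mass_opposite W x q / (mass W - W x)"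
  define a b where "a = 1 - u * (1 - 2*p) / (1 - p)" and "b = 1 + u * (1 - 2*p) / p"
  have u: "0 \<le> u" "u \<le> 1"
    using mass_opposite_nonneg[where W = W, OF W_pos] mass_opposite_le[where W = W, OF W_pos x]
      mass_minus_pos[where W = W, OF W_pos x]
    by (simp_all add: u_def)
  have a_ge: "p / (1 - p) \<le> a" and b_ge: "p / (1 - p) \<le> b"
    using odds_factors_ge[OF p_pos p_less_half u] by (simp_all add: a_def b_def)
  have "0 < p / (1 - p)"
    using p_pos p_less_half by simp
  then have a_pos: "0 < a" and b_pos: "0 < b"
    using a_ge b_ge by linarith+
  have "odds (bayes_update p W q (x < q)) x = odds W x * a"
    using odds_bayes_update(1)[of q] by (simp add: a_def u_def)
  then have agree: "round_potential x (bayes_update p W q (x < q)) = log 2 (odds W x) + log 2 a + log_odds_offset"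
    using log_odds_offset_bound[OF assms a_ge] odds_pos a_pos by (simp add: round_potential_def log_mult)
  have "odds (bayes_update p W q (\<not> x < q)) x = odds W x * b"
    using odds_bayes_update(2)[of q] by (simp add: b_def u_def)
  then have disagree: "round_potential x (bayes_update p W q (\<not> x < q)) = log 2 (odds W x) + log 2 b + log_odds_offset"
    using log_odds_offset_bound[OF assms b_ge] odds_pos b_pos by (simp add: round_potential_def log_mult)
  have "step_prob p x (Query q) True * round_potential x (bayes_update p W q True)
      + step_prob p x (Query q) False * round_potential x (bayes_update p W q False)
      = (1 - p) * round_potential x (bayes_update p W q (x < q))
        + p * round_potential x (bayes_update p W q (\<not> x < q))"
    by (cases "x < q") (simp_all add: step_prob_def)
  also have "\<dots> = log 2 (odds W x) + log_odds_offset + ((1 - p) * log 2 a + p * log 2 b)"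
    unfolding agree disagree by (simp add: algebra_simps)
  also have "\<dots> \<le> log 2 (odds W x) + log_odds_offset + (- capacity p + (1 - 2*p)\<^sup>2 * (1 - 2*u) / ln 2)"
    using expected_log_odds_factor_le[OF p_pos p_less_half u] by (simp add: a_def b_def)
  finally show ?thesis
    by (simp add: u_def)
qed

lemma query_potential_le:
  assumes "\<not> confident W"
  shows "query_potential x W c \<le> log 2 (odds W x) + log_odds_offset - 4 / 2 ^ k
           + (1 - 2*p)\<^sup>2 / ln 2 - 2 * (1 - 2*p)\<^sup>2 / ln 2 / (mass W - W x)
               * mass_opposite W x (query_point (2 ^ k) W c)"
proof -
  have "a * (1 - 2 * (y / Z)) / l = a / l - 2 * a / l / Z * y" for a y Z l :: real
    by (simp add: algebra_simps diff_divide_distrib)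
  then show ?thesis
    using expected_round_potential_le[OF assms, of "query_point (2 ^ k) W c"]
    unfolding query_potential_def drift_rate_def by simp
qed

lemma mean_query_potential_le:
  assumes "\<not> confident W"
  shows "(\<Sum>c<2 ^ k. query_potential x W c) / 2 ^ k \<le> round_potential x W"
proof -
  define K :: real where "K = 2 ^ k"
  define T where "T = log 2 (odds W x) + log_odds_offset"
  define Z where "Z = mass W - W x"
  define C where "C = (1 - 2*p)\<^sup>2 / ln 2"
  let ?opp = "\<lambda>c. mass_opposite W x (query_point (2 ^ k) W c)"
  have K_pos: "0 < K" and Z_pos: "0 < Z"
    using mass_minus_pos[where W = W, OF W_pos x] by (simp_all add: K_def Z_def)
  have "(\<Sum>c<2 ^ k. query_potential x W c) \<le> (\<Sum>c<2 ^ k. T - 4 / K + C - 2 * C / Z * ?opp c)"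
    using query_potential_le[OF assms] by (intro sum_mono) (simp add: T_def K_def C_def Z_def)
  also have "\<dots> = K * (T - 4 / K + C) - 2 * C / Z * (\<Sum>c<2 ^ k. ?opp c)"
    by (simp add: sum_subtractf sum_distrib_left K_def)
  also have "\<dots> \<le> K * (T - 4 / K + C) - 2 * C / Z * (Z * (1/2 - 1/K) * K)"
  proof -
    have "Z * (1/2 - 1/K) \<le> (\<Sum>c<2 ^ k. ?opp c) / K"
      using mean_mass_opposite_query_point_ge[where W = W, OF W_pos x, of "2 ^ k"]
      by (simp add: K_def Z_def)
    then have "Z * (1/2 - 1/K) * K \<le> (\<Sum>c<2 ^ k. ?opp c)"
      using K_pos by (simp add: field_simps)
    moreover have "0 \<le> 2 * C / Z"
      using Z_pos by (simp add: C_def)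
    ultimately have "2 * C / Z * (Z * (1/2 - 1/K) * K) \<le> 2 * C / Z * (\<Sum>c<2 ^ k. ?opp c)"
      by (rule mult_left_mono)
    then show ?thesis
      by linarith
  qed
  also have "\<dots> = K * T - 4 + 2 * C"
    using K_pos Z_pos by (simp add: field_simps)
  also have "\<dots> \<le> K * T"
    using noise_factor_le[OF p_pos p_less_half] unfolding C_def by linarith
  finally have "(\<Sum>c<2 ^ k. query_potential x W c) / K \<le> T"
    using K_pos by (simp add: field_simps)
  then show ?thesis
    by (simp add: K_def T_def round_potential_def)
qed

end

text \<open>\<open>{v * 2 ^ m..<(v + 1) * 2 ^ m}\<close> are the coin values whose first bits read \<open>v\<close>
  while \<open>m\<close> coins are still to come.\<close>
definition prefix_mean :: "nat \<Rightarrow> (nat \<Rightarrow> real) \<Rightarrow> nat \<Rightarrow> nat \<Rightarrow> real" where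
  "prefix_mean x W v m = (\<Sum>c\<in>{v * 2 ^ m..<(v + 1) * 2 ^ m}. query_potential x W c) / 2 ^ m"

lemma prefix_mean_Suc:
  "prefix_mean x W v (Suc m) = (prefix_mean x W (2 * v) m + prefix_mean x W (2 * v + 1) m) / 2"
proof -
  have "v * 2 ^ Suc m = 2 * v * 2 ^ m" "(v + 1) * 2 ^ Suc m = (2 * v + 1 + 1) * 2 ^ m"
    by simp_all
  then have split: "(\<Sum>c\<in>{v * 2 ^ Suc m..<(v + 1) * 2 ^ Suc m}. query_potential x W c)
      = (\<Sum>c\<in>{2 * v * 2 ^ m..<(2 * v + 1) * 2 ^ m}. query_potential x W c)
      + (\<Sum>c\<in>{(2 * v + 1) * 2 ^ m..<(2 * v + 1 + 1) * 2 ^ m}. query_potential x W c)"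
    by (simp only:) (rule sum.atLeastLessThan_concat[symmetric]; simp)
  show ?thesis
    unfolding prefix_mean_def split by (simp add: add_divide_distrib)
qed

definition potential :: "nat \<Rightarrow> bool list \<Rightarrow> real" where
  "potential x g = (let t = length g div (k + 1); r = length g mod (k + 1); W = weights g t in
     if r = 0 then round_potential x W
     else prefix_mean x W (nat_of_bits (drop (t * (k + 1)) g)) (k - r))"

text \<open>Counts every remaining step: each round of \<open>k + 1\<close> steps is paid for by the decrease of
  the scaled potential.\<close>
definition step_potential :: "nat \<Rightarrow> bool list \<Rightarrow> real" where
  "step_potential x g = (k + 1) / drift_rate * potential x g + (k - length g mod (k + 1))"

lemma potential_nonneg:
  assumes "0 < drift_rate"
  shows "0 \<le> potential x g"
proof -
  have "0 \<le> query_potential x W c" for W c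
    unfolding query_potential_def using assms p_pos p_less_half
    by (intro add_nonneg_nonneg mult_nonneg_nonneg step_prob_nonneg round_potential_nonneg) auto
  then show ?thesis
    unfolding potential_def prefix_mean_def Let_def
    by (auto intro!: divide_nonneg_nonneg sum_nonneg round_potential_nonneg)
qed

lemma step_potential_nonneg: "0 < drift_rate \<Longrightarrow> 0 \<le> step_potential x g"
  unfolding step_potential_def by (simp add: potential_nonneg)

lemma potential_Coin:
  assumes x: "x \<in> {1..D}" and Coin: "search g = Coin"
  shows "expected_next p search x (potential x) g \<le> potential x g"
proof -
  define t r W v where "t = length g div (k + 1)" and "r = length g mod (k + 1)"
    and "W = weights g t" and "v = nat_of_bits (drop (t * (k + 1)) g)"
  have r: "r < k"
    using search_Coin[OF Coin] by (simp add: r_def)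
  have "t * (k + 1) \<le> length g"
    using div_mult_mod_eq[of "length g" "k + 1"] by (simp add: t_def)
  then have "potential x (g @ [b]) = prefix_mean x W (2 * v + (if b then 1 else 0)) (k - Suc r)" for b
    using length_snoc_div_mod(1)[of g k b] weights_snoc_Coin[of g b] r
    by (simp add: potential_def Let_def t_def r_def W_def v_def)
  then have "expected_next p search x (potential x) g = prefix_mean x W v (k - r)"
    using r prefix_mean_Suc[of x W v "k - Suc r"]
    by (simp add: expected_next_def Coin step_prob_def Suc_diff_Suc algebra_simps)
  also have "\<dots> \<le> potential x g"
  proof (cases "r = 0")
    case True
    then have "v = 0"
      using div_mult_mod_eq[of "length g" "k + 1"] by (simp add: v_def t_def r_def)
    moreover have "\<not> confident W"
      using Coin True by (auto simp: search_def Let_def W_def t_def r_def split: if_splits)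
    moreover have "\<And>y. 0 < W y"
      by (simp add: W_def weights_pos)
    ultimately show ?thesis
      using True mean_query_potential_le[where W = W, OF _ x]
      by (simp add: prefix_mean_def potential_def Let_def atLeast0LessThan W_def t_def r_def)
  next
    case False
    then show ?thesis
      by (simp add: potential_def Let_def W_def t_def r_def v_def)
  qed
  finally show ?thesis .
qed

lemma potential_Query:
  assumes Query: "search g = Query q"
  shows "drift_rate + expected_next p search x (potential x) g = potential x g"
proof -
  define t W where "t = length g div (k + 1)" and "W = weights g t"
  have r: "length g mod (k + 1) = k" and q: "q = query_point (2 ^ k) W (coin_value g t)"
    using search_Query[OF Query] by (simp_all add: t_def W_def)
  have "potential x (g @ [b]) = round_potential x (bayes_update p W q b)" for b
    using length_snoc_div_mod(2)[OF r, of b] weights_snoc_Query[OF r, of b]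
    by (simp add: potential_def q t_def W_def)
  moreover have "coin_value g t = nat_of_bits (drop (t * (k + 1)) g)"
    using div_mult_mod_eq[of "length g" "k + 1"] r
    by (simp add: coin_value_def t_def)
  then have "potential x g = query_potential x W (coin_value g t)"
    using r k_pos by (simp add: potential_def prefix_mean_def Let_def t_def W_def)
  ultimately show ?thesis
    by (simp add: expected_next_def Query query_potential_def q)
qed

lemma potential_drift:
  assumes x: "x \<in> {1..D}" and rate: "0 < drift_rate"
  shows "drift_rate * of_bool (is_query (search g)) + expected_next p search x (potential x) g
           \<le> potential x g"
proof (cases "search g")
  case (Query q)
  then show ?thesis
    using potential_Query[OF Query] by simp
next
  case Coin
  then show ?thesis
    using potential_Coin[OF x Coin] by simp
next
  case (Return u)
  then show ?thesis
    using potential_nonneg[OF rate] by (simp add: expected_next_def step_prob_def)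
qed

lemma step_potential_drift:
  assumes x: "x \<in> {1..D}" and rate: "0 < drift_rate"
  shows "of_bool (\<not> is_return (search g)) + expected_next p search x (step_potential x) g
           \<le> step_potential x g"
proof (cases "search g")
  case (Query q)
  have r: "length g mod (k + 1) = k"
    using search_Query(1)[OF Query] .
  have "expected_next p search x (step_potential x) g
      = (k + 1) / drift_rate * expected_next p search x (potential x) g + k"
    using length_snoc_div_mod(2)[OF r]
    by (simp add: expected_next_def step_potential_def Query step_prob_def algebra_simps)
  also have "\<dots> = (k + 1) / drift_rate * (potential x g - drift_rate) + k"
    using potential_Query[OF Query, of x] by simp
  also have "\<dots> = step_potential x g - 1"
    using rate r by (simp add: step_potential_def field_simps)
  finally show ?thesis
    using Query by simp
next
  case Coin
  have r: "length g mod (k + 1) < k"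
    using search_Coin[OF Coin] .
  have "expected_next p search x (step_potential x) g
      = (k + 1) / drift_rate * expected_next p search x (potential x) g + (k - Suc (length g mod (k + 1)))"
    using length_snoc_div_mod(1)[OF r] rate
    by (simp add: expected_next_def step_potential_def Coin step_prob_def field_simps)
  also have "\<dots> \<le> (k + 1) / drift_rate * potential x g + (k - Suc (length g mod (k + 1)))"
    using potential_Coin[OF x Coin] rate by (intro add_right_mono mult_left_mono) auto
  also have "\<dots> = step_potential x g - 1"
    using r by (simp add: step_potential_def of_nat_diff)
  finally show ?thesis
    using Coin by simp
next
  case (Return u)
  then show ?thesis
    using step_potential_nonneg[OF rate] by (simp add: expected_next_def step_prob_def)
qed

section \<open>Error and cost of the shifted search\<close>

text \<open>At a history where the search returns, the posterior mass of all wrong targets is at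
  most \<open>\<epsilon>\<close> times the total posterior mass.\<close>
lemma search_error_le:
  "(\<Sum>x\<in>{1..D}. level_prob p search x (\<lambda>a. is_return a \<and> a \<noteq> Return x) K)
     \<le> \<epsilon> * (\<Sum>x\<in>{1..D}. level_prob p search x is_return K)"
proof -
  have history: "(\<Sum>x\<in>{1..D}. if is_return (search g) \<and> search g \<noteq> Return x then reach_prob p search x g else 0)
      \<le> \<epsilon> * (\<Sum>x\<in>{1..D}. if is_return (search g) then reach_prob p search x g else 0)" for g
  proof (cases "search g")
    case (Return u)
    let ?W = "weights g (length g div (k + 1))"
    have u: "u \<in> {1..D}" "(1 - \<epsilon>) * mass ?W \<le> ?W u"
      using leader_props[OF search_Return(2)[OF Return]] search_Return(3)[OF Return] by simp_all
    have "(\<Sum>x\<in>{1..D}. if u \<noteq> x then ?W x else 0) = (\<Sum>x\<in>{1..D}. ?W x - (if u = x then ?W x else 0))"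
      by (intro sum.cong) auto
    also have "\<dots> = mass ?W - ?W u"
      using u(1) by (simp add: sum_subtractf mass_def)
    finally have le: "coin_prob g * (\<Sum>x\<in>{1..D}. if u \<noteq> x then ?W x else 0) \<le> coin_prob g * (\<epsilon> * mass ?W)"
      using u(2) coin_prob_nonneg[of g] by (intro mult_left_mono) (auto simp: algebra_simps)
    have lhs: "(\<Sum>x\<in>{1..D}. if is_return (search g) \<and> search g \<noteq> Return x then reach_prob p search x g else 0)
        = coin_prob g * (\<Sum>x\<in>{1..D}. if u \<noteq> x then ?W x else 0)"
      unfolding reach_prob_search by (simp add: Return is_return_def sum_distrib_left if_distrib cong: if_cong)
    have rhs: "\<epsilon> * (\<Sum>x\<in>{1..D}. if is_return (search g) then reach_prob p search x g else 0)
        = coin_prob g * (\<epsilon> * mass ?W)"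
      unfolding reach_prob_search by (simp add: Return is_return_def sum_distrib_left mass_def algebra_simps)
    show ?thesis
      unfolding lhs rhs by (rule le)
  qed (auto simp: is_return_def)
  have "(\<Sum>x\<in>{1..D}. level_prob p search x (\<lambda>a. is_return a \<and> a \<noteq> Return x) K)
      = (\<Sum>g\<in>{h. length h = K}. \<Sum>x\<in>{1..D}.
           if is_return (search g) \<and> search g \<noteq> Return x then reach_prob p search x g else 0)"
    unfolding level_prob_def by (rule sum.swap)
  also have "\<dots> \<le> (\<Sum>g\<in>{h. length h = K}. \<epsilon> * (\<Sum>x\<in>{1..D}.
           if is_return (search g) then reach_prob p search x g else 0))"
    by (intro sum_mono history)
  also have "\<dots> = \<epsilon> * (\<Sum>x\<in>{1..D}. level_prob p search x is_return K)"
    unfolding level_prob_def sum_distrib_left[symmetric] by (subst sum.swap) simp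
  finally show ?thesis .
qed

lemma potential_Nil: "x \<in> {1..D} \<Longrightarrow> potential x [] = max 0 (log 2 (real D - 1) + log_odds_offset)"
  by (simp add: potential_def round_potential_def odds_def mass_def)

lemma shifted_search_correct:
  assumes v: "1 \<le> v" "v + 2 ^ j \<le> D + 1" and rate: "0 < drift_rate"
  shows "halt_prob p (shift_strategy search j) v = 1"
    and "ennreal (1 - (1/2) ^ j * \<epsilon> * D) \<le> success_prob p (shift_strategy search j) v"
    and "expected_queries p (shift_strategy search j) v
           \<le> ennreal (max 0 (log 2 (real D - 1) + log_odds_offset) / drift_rate)"
proof -
  let ?s = "shift_strategy search j" and ?\<Phi>\<^sub>0 = "max 0 (log 2 (real D - 1) + log_odds_offset)"
  let ?H\<^sub>0 = "(k + 1) / drift_rate * ?\<Phi>\<^sub>0 + k"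
  have p: "0 \<le> p" "p \<le> 1"
    using p_pos p_less_half by auto
  have range: "v + nat_of_bits bs \<in> {1..D}" if "length bs = j" for bs
    using nat_of_bits_less[of bs] that v by auto
  have "of_bool (\<not> is_return (?s h)) + expected_next p ?s v (shift_potential step_potential ?H\<^sub>0 1 j v) h
      \<le> shift_potential step_potential ?H\<^sub>0 1 j v h" for h
    by (rule shift_strategy_drift[where c = "\<lambda>a. of_bool (\<not> is_return a)",
          OF range step_potential_drift[OF _ rate]])
      (simp_all add: step_potential_def potential_Nil is_return_shift_action)
  moreover have "0 \<le> shift_potential step_potential ?H\<^sub>0 1 j v h" for h
    using step_potential_nonneg[OF rate] rate by (simp add: shift_potential_def)
  ultimately show halt: "halt_prob p ?s v = 1"
    by (intro halt_prob_eq_1I[OF p])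
  show "ennreal (1 - (1/2) ^ j * \<epsilon> * D) \<le> success_prob p ?s v"
    using shift_strategy_error_le[OF p _ _ range search_error_le] eps_pos
    by (intro success_prob_geI[OF p halt]) auto
  have "drift_rate * of_bool (is_query (?s h)) + expected_next p ?s v (shift_potential potential ?\<Phi>\<^sub>0 0 j v) h
      \<le> shift_potential potential ?\<Phi>\<^sub>0 0 j v h" for h
    by (rule shift_strategy_drift[where c = "\<lambda>a. drift_rate * of_bool (is_query a)",
          OF range potential_drift[OF _ rate]])
      (simp_all add: potential_Nil is_query_shift_action)
  moreover have "0 \<le> shift_potential potential ?\<Phi>\<^sub>0 0 j v h" for h
    using potential_nonneg[OF rate] by (simp add: shift_potential_def)
  ultimately have "expected_queries p ?s v \<le> ennreal (shift_potential potential ?\<Phi>\<^sub>0 0 j v [] / drift_rate)"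
    by (intro expected_queries_leI[OF p rate])
  also have "shift_potential potential ?\<Phi>\<^sub>0 0 j v [] = ?\<Phi>\<^sub>0"
    using potential_Nil[OF range[of "[]"]] by (simp add: shift_potential_def)
  finally show "expected_queries p ?s v \<le> ennreal (?\<Phi>\<^sub>0 / drift_rate)" .
qed

end

section \<open>Choice of the parameters\<close>

lemma (in noisy_search) initial_potential_le:
  assumes "real D \<le> 3 * real n"
  shows "max 0 (log 2 (real D - 1) + log_odds_offset) \<le> log 2 n + 2 + log 2 (1 / \<epsilon>) + log 2 ((1 - p) / p)"
proof -
  have "1 \<le> n"
    using assms two_le_D by simp
  have "log 2 (real D - 1) \<le> log 2 (3 * real n)"
    using assms two_le_D by simp
  also have "\<dots> \<le> 2 + log 2 n"
    using \<open>1 \<le> n\<close> log_of_power_le[of 3 2 2] by (simp add: log_mult)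
  finally have "log 2 (real D - 1) \<le> 2 + log 2 n" .
  moreover have "0 \<le> log 2 n" "0 \<le> log 2 (1 / \<epsilon>)" "0 \<le> log 2 ((1 - p) / p)"
    using \<open>1 \<le> n\<close> eps_pos eps_less_half p_pos p_less_half by simp_all
  ultimately show ?thesis
    using log_odds_offset_le by (intro max.boundedI) linarith+
qed

lemma exists_power_of_two_between: "1 \<le> n \<Longrightarrow> \<exists>j. real n < 2 ^ j \<and> 2 ^ j \<le> 2 * real n"
proof -
  assume "1 \<le> n"
  then obtain i where "2 ^ i \<le> n" "n < 2 ^ (i + 1)"
    using ex_power_ivl1[of 2 n] by auto
  then have "real n < real (2 ^ (i + 1))" "real (2 ^ (i + 1)) \<le> real (2 * n)"
    by (simp_all only: of_nat_less_iff of_nat_le_iff) simp_all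
  then show ?thesis
    by (intro exI[of _ "i + 1"]) simp
qed

lemma noisy_search_strategy_exists:
  fixes p \<delta> :: real and n k :: nat
  assumes p: "0 < p" "p < 1/2" and \<delta>: "0 < \<delta>" "\<delta> < 1" and n: "1 \<le> n" and k: "1 \<le> k"
    and rate: "0 < capacity p - 4 / 2 ^ k"
  shows "\<exists>s. \<forall>v\<in>{1..n}. halt_prob p s v = 1 \<and> ennreal (1 - \<delta>) \<le> success_prob p s v \<and>
           expected_queries p s v
             \<le> ennreal ((log 2 n + 3 + log 2 (1 / \<delta>) + log 2 ((1 - p) / p)) / (capacity p - 4 / 2 ^ k))"
proof -
  obtain j where j: "real n < 2 ^ j" "2 ^ j \<le> 2 * real n"
    using exists_power_of_two_between[OF n] by blast
  define D where "D = n + 2 ^ j - 1"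
  have "n < 2 ^ j"
    using j(1) by (metis of_nat_less_iff of_nat_numeral of_nat_power)
  then have "real D = real n + 2 ^ j - 1"
    by (simp add: D_def of_nat_diff)
  then have D: "2 \<le> D" "real D \<le> 3 * real n" "real D < 2 * 2 ^ j"
    using j n by linarith+
  interpret noisy_search D p k "\<delta> / 2"
    by unfold_locales (use p \<delta> k D in auto)
  have "0 < drift_rate"
    using rate by (simp add: drift_rate_def)
  have "log 2 (1 / (\<delta> / 2)) = 1 + log 2 (1 / \<delta>)"
    using \<delta> log_mult[of 2 2 "1 / \<delta>"] by simp
  then have queries: "max 0 (log 2 (real D - 1) + log_odds_offset) / drift_rate
      \<le> (log 2 n + 3 + log 2 (1 / \<delta>) + log 2 ((1 - p) / p)) / (capacity p - 4 / 2 ^ k)"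
    using initial_potential_le[OF D(2)] \<open>0 < drift_rate\<close> by (simp add: drift_rate_def divide_right_mono)
  have error: "(1/2) ^ j * (\<delta> / 2) * D \<le> \<delta>"
    using D(3) \<delta> by (simp add: field_simps)
  show ?thesis
  proof (intro exI[of _ "shift_strategy search j"] ballI conjI)
    fix v
    assume "v \<in> {1..n}"
    then have "1 \<le> v" "v + 2 ^ j \<le> D + 1"
      by (auto simp: D_def)
    note correct = shifted_search_correct[OF this \<open>0 < drift_rate\<close>]
    show "halt_prob p (shift_strategy search j) v = 1"
      by (rule correct(1))
    show "ennreal (1 - \<delta>) \<le> success_prob p (shift_strategy search j) v"
      using error by (intro order_trans[OF _ correct(2)] ennreal_leI) simp
    show "expected_queries p (shift_strategy search j) v
        \<le> ennreal ((log 2 n + 3 + log 2 (1 / \<delta>) + log 2 ((1 - p) / p)) / (capacity p - 4 / 2 ^ k))"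
      using queries by (intro order_trans[OF correct(3)] ennreal_leI)
  qed
qed

lemma log_overhead_numerator_le:
  fixes L l c :: real
  assumes L: "2 \<le> L" and l: "0 \<le> l" and c: "0 \<le> c"
  shows "(L + 3 + l + c) * (1 + 1 / L) \<le> L + (6 + 2 * c) * log 2 L + (6 + 2 * c) * l"
proof -
  have "1 \<le> log 2 L"
    using L by simp
  then have "6 + 2 * c \<le> (6 + 2 * c) * log 2 L"
    using c mult_left_mono[of 1 "log 2 L" "6 + 2 * c"] by simp
  then have log_term: "11/2 + 3/2 * c \<le> (6 + 2 * c) * log 2 L"
    using c by linarith
  have l_term: "3/2 * l \<le> (6 + 2 * c) * l"
    using l c by (intro mult_right_mono) auto
  have "(L + 3 + l + c) * (1 + 1 / L) = L + 4 + l + c + (3 + l + c) / L"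
    using L by (simp add: field_simps)
  also have "\<dots> \<le> L + 4 + l + c + (3 + l + c) / 2"
    using L l c by (intro add_left_mono divide_left_mono) auto
  also have "\<dots> = L + (11/2 + 3/2 * c) + 3/2 * l"
    by (simp add: field_simps)
  also have "\<dots> \<le> L + (6 + 2 * c) * log 2 L + (6 + 2 * c) * l"
    using log_term l_term by (intro add_mono order_refl)
  finally show ?thesis .
qed

lemma log_overhead_le:
  fixes L l c I R :: real
  assumes L: "2 \<le> L" and l: "0 \<le> l" and c: "0 \<le> c" and I: "0 < I"
    and R: "I * (1 - 1 / (2 * L)) \<le> R"
  shows "(L + 3 + l + c) / R \<le> (L + (6 + 2 * c) * log 2 L + (6 + 2 * c) * l) / I"
proof -
  define X where "X = L + 3 + l + c"
  have X: "0 \<le> X"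
    using L l c by (simp add: X_def)
  have shrink: "0 < 1 - 1 / (2 * L)"
    using L by (simp add: field_simps)
  then have pos: "0 < I * (1 - 1 / (2 * L))"
    using I by simp
  then have "0 < R"
    using R by linarith
  then have "X / R \<le> X / (I * (1 - 1 / (2 * L)))"
    by (rule divide_left_mono[OF R X mult_pos_pos[OF _ pos]])
  also have "\<dots> = X / (1 - 1 / (2 * L)) / I"
    by simp
  also have "\<dots> \<le> X * (1 + 1 / L) / I"
  proof -
    have "1 \<le> (1 + 1 / L) * (1 - 1 / (2 * L))"
      using L by (simp add: field_simps)
    then have "X \<le> X * (1 + 1 / L) * (1 - 1 / (2 * L))"
      using X mult_left_mono[of 1 _ X] by (simp add: mult.assoc)
    then have "X / (1 - 1 / (2 * L)) \<le> X * (1 + 1 / L)"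
      using shrink by (simp add: pos_divide_le_eq)
    then show ?thesis
      by (rule divide_right_mono) (use I in simp)
  qed
  also have "\<dots> \<le> (L + (6 + 2 * c) * log 2 L + (6 + 2 * c) * l) / I"
    using log_overhead_numerator_le[OF L l c] I by (simp add: X_def divide_right_mono)
  finally show ?thesis
    by (simp only: X_def)
qed

lemma exists_coin_count:
  fixes I L :: real
  assumes I: "0 < I" and L: "1 \<le> L"
  shows "\<exists>k\<ge>1. 0 < I - 4 / 2 ^ k \<and> I * (1 - 1 / (2 * L)) \<le> I - 4 / 2 ^ k"
proof -
  obtain k where "8 * L / I < 2 ^ k"
    using real_arch_pow[of 2] by auto
  then have "8 * L < I * 2 ^ k"
    using I by (simp add: field_simps)
  then have "4 / 2 ^ Suc k \<le> I / (2 * L)"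
    using L by (simp add: field_simps)
  moreover have "0 < I * (1 - 1 / (2 * L))"
    using I L by (intro mult_pos_pos) (simp_all add: field_simps)
  ultimately show ?thesis
    by (intro exI[of _ "Suc k"]) (simp add: right_diff_distrib)
qed

theorem corollary1:
  fixes p :: real
  assumes "0 < p" and "p < 1 / 2"
  shows "\<exists>(C::real) (N::nat). \<forall>(\<delta>::real) (n::nat).
           0 < \<delta> \<and> \<delta> < 1 / 2 \<and> N \<le> n \<longrightarrow>
           (\<exists>s :: bool list \<Rightarrow> action. \<forall>v \<in> {1..n}.
              halt_prob p s v = 1 \<and>
              success_prob p s v \<ge> ennreal (1 - \<delta>) \<and>
              expected_queries p s v \<le>
                ennreal ((log 2 n + C * log 2 (log 2 n) + C * log 2 (1 / \<delta>)) / capacity p))"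
proof -
  define c where "c = log 2 ((1 - p) / p)"
  have c: "0 \<le> c" and I: "0 < capacity p"
    using assms capacity_pos by (simp_all add: c_def)
  show ?thesis
  proof (intro exI[of _ "6 + 2 * c"] exI[of _ "4::nat"] allI impI)
    fix \<delta> :: real and n :: nat
    assume "0 < \<delta> \<and> \<delta> < 1 / 2 \<and> 4 \<le> n"
    then have \<delta>: "0 < \<delta>" "\<delta> < 1" "0 \<le> log 2 (1 / \<delta>)" and n: "1 \<le> n" "2 \<le> log 2 n"
      using le_log2_of_power[of 2 n] by auto
    then have "1 \<le> log 2 n"
      by linarith
    then obtain k where k: "1 \<le> k" "0 < capacity p - 4 / 2 ^ k"
      and rate: "capacity p * (1 - 1 / (2 * log 2 n)) \<le> capacity p - 4 / 2 ^ k"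
      using exists_coin_count[OF I] by blast
    obtain s where s: "\<forall>v\<in>{1..n}. halt_prob p s v = 1 \<and> ennreal (1 - \<delta>) \<le> success_prob p s v \<and>
        expected_queries p s v \<le> ennreal ((log 2 n + 3 + log 2 (1 / \<delta>) + c) / (capacity p - 4 / 2 ^ k))"
      using noisy_search_strategy_exists[OF assms \<delta>(1,2) n(1) k] unfolding c_def by auto
    have "(log 2 n + 3 + log 2 (1 / \<delta>) + c) / (capacity p - 4 / 2 ^ k)
        \<le> (log 2 n + (6 + 2 * c) * log 2 (log 2 n) + (6 + 2 * c) * log 2 (1 / \<delta>)) / capacity p"
      by (rule log_overhead_le[OF n(2) \<delta>(3) c I rate])
    then show "\<exists>s. \<forall>v\<in>{1..n}. halt_prob p s v = 1 \<and> ennreal (1 - \<delta>) \<le> success_prob p s v \<and>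
        expected_queries p s v
          \<le> ennreal ((log 2 n + (6 + 2 * c) * log 2 (log 2 n) + (6 + 2 * c) * log 2 (1 / \<delta>)) / capacity p)"
      using s by (intro exI[of _ s]) (auto intro: order_trans[OF _ ennreal_leI])
  qed
qed

end
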